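(* The function $e(\lambda)$ is strictly increasing on $(\lambda^*,\infty)$; in fact $e'(\lambda)>0$ for all $\lambda>\lambda^*$.
   Context: Standing setup. Let $\gamma>0$; let $a_1,\dots,a_p>0$ with weights $\omega_i>0$, $\sum_i\omega_i=1$, and $b_1,\dots,b_n>0$ with weights $\pi_j>0$, $\sum_j\pi_j=1$. Let $\mu$ be the limiting spectral distribution of $\mathbf{N}\mathbf{N}^T$ where $\mathbf{N}=\mathbf{A}^{1/2}\mathbf{G}\mathbf{B}^{1/2}$ is $k\times l$, $\mathbf{G}$ has iid mean-zero entries of variance $1/l$, $k/l\to\gamma$, and the spectral distributions of $\mathbf{A},\mathbf{B}$ converge to $\nu=\sum_i\omega_i\delta_{a_i}$ and $\underline{\nu}=\sum_j\pi_j\delta_{b_j}$. $\mu$ is a compactly supported probability measure on $[0,\infty)$; $\lambda^*>0$ is the right endpoint of its support, and $s(\lambda)=\int\frac{d\mu(t)}{t-\lambda}$ for $\lambda>\lambda^*$. Define $G(e)=\sum_{j=1}^n\frac{b_j\pi_j}{1+\gamma b_j e}$ and $F(\lambda,e)=e-\sum_{i=1}^p\frac{a_i\omega_i}{a_iG(e)-\lambda}$. It is known (master equations) that there is a smooth real function $e(\lambda)$ on $(\lambda^*,\infty)$, never equal to a pole $-1/(\gamma b_j)$ of $G$ and with $a_iG(e(\lambda))\ne\lambda$, satisfying $s(\lambda)=\sum_{i=1}^p\frac{\omega_i}{a_iG(e(\lambda))-\lambda}$ and $F(\lambda,e(\lambda))=0$. *)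

theory Defs
  imports "HOL-Probability.Probability"
begin

definition msupport :: "real measure \<Rightarrow> real set" where
  "msupport M = {x. \<forall>r>0. emeasure M (ball x r) > 0}"

definition stieltjes :: "real measure \<Rightarrow> real \<Rightarrow> real" where
  "stieltjes M l = (\<integral>t. 1 / (t - l) \<partial>M)"

definition Gfun :: "real \<Rightarrow> nat \<Rightarrow> (nat \<Rightarrow> real) \<Rightarrow> (nat \<Rightarrow> real) \<Rightarrow> real \<Rightarrow> real" where
  "Gfun \<gamma> n b \<pi> e = (\<Sum>j<n. b j * \<pi> j / (1 + \<gamma> * b j * e))"

definition Ffun :: "real \<Rightarrow> nat \<Rightarrow> (nat \<Rightarrow> real) \<Rightarrow> (nat \<Rightarrow> real) \<Rightarrow> nat \<Rightarrow> (nat \<Rightarrow> real) \<Rightarrow> (nat \<Rightarrow> real)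
    \<Rightarrow> real \<Rightarrow> real \<Rightarrow> real" where
  "Ffun \<gamma> p a \<omega> n b \<pi> l e = e - (\<Sum>i<p. a i * \<omega> i / (a i * Gfun \<gamma> n b \<pi> e - l))"

end

theory Submission
  imports Defs
begin

text \<open>
  Eliminating the sum between the two master equations gives \<open>e G(e) = 1 + \<lambda> s(\<lambda>)\<close>,
  and \<open>1 + \<lambda> s(\<lambda>) = \<integral> t / (t - \<lambda>) d\<mu>(t)\<close> is nondecreasing in \<open>\<lambda> > \<lambda>*\<close> because
  \<open>\<mu>\<close> lives on \<open>[0, \<lambda>*]\<close>. Since \<open>E \<mapsto> E G(E)\<close> has the positive derivative
  \<open>\<Sum>\<^sub>j b\<^sub>j \<pi>\<^sub>j / (1 + \<gamma> b\<^sub>j E)\<^sup>2\<close>, the chain rule gives \<open>e' \<ge> 0\<close>. Finally \<open>e'\<close> cannot vanish: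
  differentiating \<open>F(\<lambda>, e(\<lambda>)) = 0\<close> at a point where \<open>e' = 0\<close> would give
  \<open>\<Sum>\<^sub>i a\<^sub>i \<omega>\<^sub>i / (a\<^sub>i G(e) - \<lambda>)\<^sup>2 = 0\<close>.
\<close>

lemma AE_in_msupport:
  fixes M :: "real measure"
  assumes "sets M = sets borel"
  shows "AE t in M. t \<in> msupport M"
proof -
  define I where "I = {q::rat\<times>rat. emeasure M {real_of_rat (fst q)<..<real_of_rat (snd q)} = 0}"
  define N where "N = (\<Union>q\<in>I. {real_of_rat (fst q)<..<real_of_rat (snd q)})"
  have "N \<in> null_sets M"
    unfolding N_def by (rule null_sets_UN') (auto simp: I_def null_sets_def assms)
  moreover have "{t \<in> space M. t \<notin> msupport M} \<subseteq> N"
  proof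
    fix t assume "t \<in> {t \<in> space M. t \<notin> msupport M}"
    then obtain r where r: "r > 0" "emeasure M (ball t r) = 0"
      by (auto simp: msupport_def not_less)
    obtain q1 where q1: "t - r < real_of_rat q1" "real_of_rat q1 < t"
      using of_rat_dense[of "t - r" t] r by auto
    obtain q2 where q2: "t < real_of_rat q2" "real_of_rat q2 < t + r"
      using of_rat_dense[of t "t + r"] r by auto
    have "{real_of_rat q1<..<real_of_rat q2} \<subseteq> ball t r"
      using q1 q2 by (auto simp: ball_def dist_real_def)
    then have "emeasure M {real_of_rat q1<..<real_of_rat q2} \<le> emeasure M (ball t r)"
      by (rule emeasure_mono) (simp add: assms)
    then have "(q1, q2) \<in> I" using r by (simp add: I_def)
    then show "t \<in> N" using q1 q2 unfolding N_def by (intro UN_I[of "(q1, q2)"]) auto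
  qed
  ultimately show ?thesis by (rule AE_I')
qed

lemma AE_between_zero_and_Sup_msupport:
  fixes M :: "real measure"
  assumes "sets M = sets borel" and "msupport M \<subseteq> {0..}" and "bdd_above (msupport M)"
  shows "AE t in M. 0 \<le> t \<and> t \<le> Sup (msupport M)"
  using AE_in_msupport[OF assms(1)]
  by eventually_elim (use assms(2,3) cSup_upper in auto)

lemma integrable_stieltjes_kernel:
  fixes M :: "real measure"
  assumes "finite_measure M" and "sets M = sets borel"
    and "AE t in M. t \<le> c" and "c < x"
  shows "integrable M (\<lambda>t. 1 / (t - x))"
proof (rule finite_measure.integrable_const_bound[OF assms(1), where B = "1 / (x - c)"])
  show "AE t in M. norm (1 / (t - x)) \<le> 1 / (x - c)"
    using assms(3) by eventually_elim (use assms(4) in \<open>auto intro!: divide_left_mono\<close>)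
  show "(\<lambda>t. 1 / (t - x)) \<in> borel_measurable M"
    unfolding measurable_cong_sets[OF assms(2) refl] by measurable
qed

lemma mono_on_times_stieltjes:
  fixes M :: "real measure"
  assumes M: "finite_measure M" "sets M = sets borel" and supp: "AE t in M. 0 \<le> t \<and> t \<le> c"
  shows "mono_on {c<..} (\<lambda>x. x * stieltjes M x)"
proof (rule mono_onI)
  fix x y assume xy: "x \<in> {c<..}" "y \<in> {c<..}" "x \<le> y"
  have int: "integrable M (\<lambda>t. z * (1 / (t - z)))" if "z \<in> {c<..}" for z
  proof (rule integrable_mult_right, rule integrable_stieltjes_kernel[OF M])
    show "AE t in M. t \<le> c" using supp by eventually_elim simp
  qed (use that in simp)
  have "y * stieltjes M y - x * stieltjes M x = (\<integral>t. y * (1 / (t - y)) - x * (1 / (t - x)) \<partial>M)"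
    unfolding stieltjes_def Bochner_Integration.integral_diff[OF int[OF xy(2)] int[OF xy(1)]]
      integral_mult_right_zero ..
  also have "\<dots> \<ge> 0"
  proof (rule integral_nonneg_AE)
    show "AE t in M. 0 \<le> y * (1 / (t - y)) - x * (1 / (t - x))"
      using supp
    proof eventually_elim
      case (elim t)
      then have "y * (1 / (t - y)) - x * (1 / (t - x)) = t * (y - x) / ((y - t) * (x - t))"
        using xy by (simp add: field_simps)
      then show ?case using elim xy by simp
    qed
  qed
  finally show "x * stieltjes M x \<le> y * stieltjes M y" by simp
qed

lemma has_real_derivative_nonneg_if_right_mono:
  fixes f :: "real \<Rightarrow> real"
  assumes "(f has_real_derivative D) (at x)" and "\<And>y. y > x \<Longrightarrow> f x \<le> f y"
  shows "D \<ge> 0"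
proof (rule ccontr)
  assume "\<not> D \<ge> 0"
  then obtain d where "d > 0" "\<forall>h>0. h < d \<longrightarrow> f (x + h) < f x"
    using DERIV_neg_dec_right[OF assms(1)] by auto
  then show False using assms(2)[of "x + d / 2"] by (auto dest: spec[of _ "d / 2"])
qed

lemma strict_mono_on_greaterThan_if_deriv_pos:
  fixes f :: "real \<Rightarrow> real"
  assumes "\<And>x. x > c \<Longrightarrow> (f has_real_derivative deriv f x) (at x)"
    and "\<And>x. x > c \<Longrightarrow> deriv f x > 0"
  shows "strict_mono_on {c<..} f"
proof (rule strict_mono_onI)
  fix r s assume "r \<in> {c<..}" "r < s"
  then show "f r < f s"
  proof (intro DERIV_pos_imp_increasing[OF \<open>r < s\<close>] exI conjI)
    fix y assume "r \<le> y"
    with \<open>r \<in> {c<..}\<close> have "y > c" by simp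
    then show "(f has_real_derivative deriv f y) (at y)" "deriv f y > 0"
      using assms by blast+
  qed
qed

lemma one_plus_times_ne_zero_off_pole:
  fixes c E :: real
  assumes "c \<noteq> 0" and "E \<noteq> - 1 / c"
  shows "1 + c * E \<noteq> 0"
  using assms by (metis add.commute add_eq_0_iff divide_minus_left nonzero_mult_div_cancel_left)

lemma Gfun_differentiable:
  assumes "\<forall>j<n. 1 + \<gamma> * b j * E \<noteq> 0"
  shows "Gfun \<gamma> n b \<pi> differentiable (at E)"
  unfolding Gfun_def
  using assms by (intro differentiable_sum ballI differentiable_divide derivative_intros) auto

lemma has_real_derivative_times_Gfun:
  assumes "\<forall>j<n. 1 + \<gamma> * b j * E \<noteq> 0"
  shows "((\<lambda>y. y * Gfun \<gamma> n b \<pi> y) has_real_derivative (\<Sum>j<n. b j * \<pi> j / (1 + \<gamma> * b j * E)\<^sup>2)) (at E)"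
proof -
  have "(\<lambda>y. y * Gfun \<gamma> n b \<pi> y) = (\<lambda>y. \<Sum>j<n. b j * \<pi> j * y / (1 + \<gamma> * b j * y))"
    unfolding Gfun_def by (simp add: sum_distrib_left algebra_simps)
  moreover have "((\<lambda>y. b j * \<pi> j * y / (1 + \<gamma> * b j * y)) has_real_derivative
                    b j * \<pi> j / (1 + \<gamma> * b j * E)\<^sup>2) (at E)" if "j < n" for j
    using assms that
    by (auto intro!: derivative_eq_intros simp: power2_eq_square field_simps)
  ultimately show ?thesis by (auto intro!: DERIV_sum)
qed

lemma Ffun_zero_imp_times_Gfun:
  assumes "Ffun \<gamma> p a \<omega> n b \<pi> x E = 0" and "(\<Sum>i<p. \<omega> i) = 1"
    and "\<forall>i<p. a i * Gfun \<gamma> n b \<pi> E \<noteq> x"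
  shows "E * Gfun \<gamma> n b \<pi> E = 1 + x * (\<Sum>i<p. \<omega> i / (a i * Gfun \<gamma> n b \<pi> E - x))"
proof -
  define g where "g = Gfun \<gamma> n b \<pi> E"
  have "E = (\<Sum>i<p. a i * \<omega> i / (a i * g - x))"
    using assms(1) by (simp add: Ffun_def g_def)
  then have "E * g = (\<Sum>i<p. a i * \<omega> i / (a i * g - x) * g)"
    by (simp add: sum_distrib_right)
  also have "\<dots> = (\<Sum>i<p. \<omega> i + x * (\<omega> i / (a i * g - x)))"
    using assms(3) by (intro sum.cong) (auto simp: g_def field_simps)
  finally show ?thesis
    using assms(2) by (simp add: sum.distrib sum_distrib_left g_def)
qed

lemma has_real_derivative_Ffun_curve:
  assumes e_deriv: "(e has_real_derivative D) (at x)"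
    and G_deriv: "(Gfun \<gamma> n b \<pi> has_real_derivative G') (at (e x))"
    and nonsing: "\<forall>i<p. a i * Gfun \<gamma> n b \<pi> (e x) \<noteq> x"
  shows "((\<lambda>y. Ffun \<gamma> p a \<omega> n b \<pi> y (e y)) has_real_derivative
           D + (\<Sum>i<p. a i * \<omega> i * (a i * G' * D - 1) / (a i * Gfun \<gamma> n b \<pi> (e x) - x)\<^sup>2)) (at x)"
proof -
  have "((\<lambda>y. \<Sum>i<p. a i * \<omega> i / (a i * Gfun \<gamma> n b \<pi> (e y) - y)) has_real_derivative
          (\<Sum>i<p. - (a i * \<omega> i * (a i * G' * D - 1) / (a i * Gfun \<gamma> n b \<pi> (e x) - x)\<^sup>2))) (at x)"
    using nonsing DERIV_chain2[OF G_deriv e_deriv]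
    by (auto intro!: DERIV_sum derivative_eq_intros simp: power2_eq_square)
  from DERIV_diff[OF e_deriv this] show ?thesis
    unfolding Ffun_def by (simp add: sum_negf)
qed

lemma has_real_derivative_nonneg_if_times_Gfun_mono:
  assumes e_deriv: "(e has_real_derivative D) (at x)"
    and b_pos: "\<forall>j<n. b j > 0" and \<pi>_pos: "\<forall>j<n. \<pi> j > 0" and "n > 0"
    and nopole: "\<forall>j<n. 1 + \<gamma> * b j * e x \<noteq> 0"
    and mono: "\<And>y. y > x \<Longrightarrow> e x * Gfun \<gamma> n b \<pi> (e x) \<le> e y * Gfun \<gamma> n b \<pi> (e y)"
  shows "D \<ge> 0"
proof -
  define D\<phi> where "D\<phi> = (\<Sum>j<n. b j * \<pi> j / (1 + \<gamma> * b j * e x)\<^sup>2)"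
  have "D\<phi> > 0"
    unfolding D\<phi>_def using b_pos \<pi>_pos nopole \<open>n > 0\<close> by (intro sum_pos) auto
  moreover have "D\<phi> * D \<ge> 0"
    using DERIV_chain2[OF has_real_derivative_times_Gfun[OF nopole] e_deriv] unfolding D\<phi>_def
    by (rule has_real_derivative_nonneg_if_right_mono) (use mono D\<phi>_def in auto)
  ultimately show ?thesis by (simp add: zero_le_mult_iff)
qed

lemma has_real_derivative_nonzero_on_Ffun_zero_curve:
  assumes e_deriv: "(e has_real_derivative D) (at x)"
    and a_pos: "\<forall>i<p. a i > 0" and \<omega>_pos: "\<forall>i<p. \<omega> i > 0" and "p > 0"
    and nopole: "\<forall>j<n. 1 + \<gamma> * b j * e x \<noteq> 0"
    and nonsing: "\<forall>i<p. a i * Gfun \<gamma> n b \<pi> (e x) \<noteq> x"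
    and curve: "open S" "x \<in> S" "\<forall>y\<in>S. Ffun \<gamma> p a \<omega> n b \<pi> y (e y) = 0"
  shows "D \<noteq> 0"
proof
  assume "D = 0"
  obtain G' where G': "(Gfun \<gamma> n b \<pi> has_real_derivative G') (at (e x))"
    using Gfun_differentiable[OF nopole] by (auto simp: real_differentiable_def)
  have "((\<lambda>y. Ffun \<gamma> p a \<omega> n b \<pi> y (e y)) has_real_derivative
          - (\<Sum>i<p. a i * \<omega> i / (a i * Gfun \<gamma> n b \<pi> (e x) - x)\<^sup>2)) (at x)"
    using has_real_derivative_Ffun_curve[OF e_deriv G' nonsing] \<open>D = 0\<close>
    by (simp add: sum_negf)
  moreover have "((\<lambda>y. Ffun \<gamma> p a \<omega> n b \<pi> y (e y)) has_real_derivative 0) (at x)"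
    using curve by (intro has_field_derivative_transform_within_open[OF DERIV_const]) auto
  ultimately have "(\<Sum>i<p. a i * \<omega> i / (a i * Gfun \<gamma> n b \<pi> (e x) - x)\<^sup>2) = 0"
    using DERIV_unique by fastforce
  moreover have "(\<Sum>i<p. a i * \<omega> i / (a i * Gfun \<gamma> n b \<pi> (e x) - x)\<^sup>2) > 0"
    using a_pos \<omega>_pos nonsing \<open>p > 0\<close> by (intro sum_pos) auto
  ultimately show False by simp
qed

theorem proposition3p7:
  fixes \<gamma> :: real and p n :: nat and a \<omega> b \<pi> :: "nat \<Rightarrow> real"
    and \<mu> :: "real measure" and lstar :: real and e :: "real \<Rightarrow> real"
  assumes gamma_pos: "\<gamma> > 0"
    and a_pos: "\<forall>i<p. a i > 0" and \<omega>_pos: "\<forall>i<p. \<omega> i > 0" and \<omega>_sum: "(\<Sum>i<p. \<omega> i) = 1"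
    and b_pos: "\<forall>j<n. b j > 0" and \<pi>_pos: "\<forall>j<n. \<pi> j > 0" and \<pi>_sum: "(\<Sum>j<n. \<pi> j) = 1"
    and mu_prob: "prob_space \<mu>" and mu_borel: "sets \<mu> = sets borel"
    and mu_compact: "compact (msupport \<mu>)"
    and mu_nonneg: "msupport \<mu> \<subseteq> {0..}"
    and lstar_def: "lstar = Sup (msupport \<mu>)"
    and lstar_pos: "lstar > 0"
    and e_smooth: "\<forall>k. \<forall>x>lstar. (deriv ^^ k) e differentiable (at x)"
    and e_no_pole: "\<forall>x>lstar. \<forall>j<n. e x \<noteq> - 1 / (\<gamma> * b j)"
    and e_no_sing: "\<forall>x>lstar. \<forall>i<p. a i * Gfun \<gamma> n b \<pi> (e x) \<noteq> x"
    and master_s: "\<forall>x>lstar. stieltjes \<mu> x = (\<Sum>i<p. \<omega> i / (a i * Gfun \<gamma> n b \<pi> (e x) - x))"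
    and master_F: "\<forall>x>lstar. Ffun \<gamma> p a \<omega> n b \<pi> x (e x) = 0"
  shows "strict_mono_on {lstar<..} e \<and> (\<forall>x>lstar. deriv e x > 0)"
proof -
  have "p > 0" using \<omega>_sum by (cases p) auto
  have "n > 0" using \<pi>_sum by (cases n) auto
  have e_deriv: "(e has_real_derivative deriv e x) (at x)" if "x > lstar" for x
    using e_smooth that by (metis DERIV_deriv_iff_real_differentiable funpow_0)
  have nopole: "\<forall>j<n. 1 + \<gamma> * b j * e x \<noteq> 0" if "x > lstar" for x
    using e_no_pole that gamma_pos b_pos
    by (intro allI impI one_plus_times_ne_zero_off_pole) auto
  have "AE t in \<mu>. 0 \<le> t \<and> t \<le> lstar"
    unfolding lstar_def using mu_compact
    by (intro AE_between_zero_and_Sup_msupport[OF mu_borel mu_nonneg]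
        bounded_imp_bdd_above compact_imp_bounded)
  then have "mono_on {lstar<..} (\<lambda>x. x * stieltjes \<mu> x)"
    using mu_prob mu_borel by (intro mono_on_times_stieltjes) (auto simp: prob_space_def)
  moreover have "e x * Gfun \<gamma> n b \<pi> (e x) = 1 + x * stieltjes \<mu> x" if "x > lstar" for x
    using Ffun_zero_imp_times_Gfun[OF _ \<omega>_sum] master_F master_s e_no_sing that by auto
  ultimately have "mono_on {lstar<..} (\<lambda>x. e x * Gfun \<gamma> n b \<pi> (e x))"
    by (auto intro!: mono_onI dest: mono_onD)
  then have "deriv e x \<ge> 0" if "x > lstar" for x
    using that
    by (intro has_real_derivative_nonneg_if_times_Gfun_mono[OF e_deriv[OF that] b_pos \<pi>_pos \<open>n > 0\<close> nopole[OF that]])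
      (auto elim!: mono_onD)
  moreover have "deriv e x \<noteq> 0" if "x > lstar" for x
  proof (rule has_real_derivative_nonzero_on_Ffun_zero_curve[OF e_deriv[OF that] a_pos \<omega>_pos \<open>p > 0\<close>
      nopole[OF that]])
    show "\<forall>i<p. a i * Gfun \<gamma> n b \<pi> (e x) \<noteq> x" using e_no_sing that by blast
    show "\<forall>y\<in>{lstar<..}. Ffun \<gamma> p a \<omega> n b \<pi> y (e y) = 0" using master_F by blast
  qed (use that in auto)
  ultimately have deriv_pos: "\<forall>x>lstar. deriv e x > 0"
    by (simp add: less_le)
  moreover have "strict_mono_on {lstar<..} e"
    using e_deriv deriv_pos by (intro strict_mono_on_greaterThan_if_deriv_pos) auto
  ultimately show ?thesis by simp
qed
end
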